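(* Let $\mathcal{U}$ be a selective nonprincipal ultrafilter on $\mathbb{N}$ and let $X$ be a reflexive Banach space. Let $(x_n)_{n\ge1}$ be a bounded sequence in $X$ and $(x_n^{*})_{n\ge1}$ a bounded sequence in $X^{*}$ with $(x_n)_{n,\mathcal{U}}\in\widehat{X}$ and $(x_n^{*})_{n,\mathcal{U}}\in\widehat{X^{*}}$. Assume that for every $x\in X$ the series $\sum_{i=1}^{\infty}x_i^{*}(x)x_i$ converges unconditionally. For $A\in\mathcal{U}$ let $T_A\in B(X)$ be $T_Ax=\sum_{i\in A}x_i^{*}(x)x_i$. Then, regarding $\mathcal{U}$ as a net directed by reverse inclusion, $T_A^{\mathcal{U}}\to (x_n)_{n,\mathcal{U}}\otimes(x_n^{*})_{n,\mathcal{U}}$ in the strong operator topology of $B(X^{\mathcal{U}})$, where $(x_n)_{n,\mathcal{U}}\otimes(x_n^{*})_{n,\mathcal{U}}$ is the rank one operator $(y_n)_{n,\mathcal{U}}\mapsto\big(\lim_{n,\mathcal{U}}x_n^{*}(y_n)\big)(x_n)_{n,\mathcal{U}}$ on $X^{\mathcal{U}}$.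
   Context: For a Banach space $X$, $X^{\mathcal{U}}$ is the ultrapower (bounded sequences modulo those with $\lim_{n,\mathcal{U}}\|x_n\|=0$), $(x_n)_{n,\mathcal{U}}$ the class of $(x_n)$, and for $T\in B(X)$, $T^{\mathcal{U}}(x_n)_{n,\mathcal{U}}=(Tx_n)_{n,\mathcal{U}}$. $X$ is identified with constant classes. For reflexive $X$, $\widehat{X}=\{(x_n)_{n,\mathcal{U}}: w\text{-}\lim_{n,\mathcal{U}}x_n=0\}$, similarly for $\widehat{X^{*}}$. An ultrafilter $\mathcal{U}$ on $\mathbb{N}$ is selective if (1) for every sequence $A_1,A_2,\dots$ in $\mathcal{U}$ there is $A\in\mathcal{U}$ with $A\setminus A_k$ finite for each $k$; and (2) for every partition of $\mathbb{N}$ into finite sets $A_1,A_2,\dots$ there is $A\in\mathcal{U}$ with $A\cap A_k$ a singleton for each $k$. *)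

theory Defs
  imports "HOL-Analysis.Analysis"
begin

definition in_uf :: "nat filter \<Rightarrow> nat set \<Rightarrow> bool" where
  "in_uf U A \<longleftrightarrow> eventually (\<lambda>n. n \<in> A) U"

definition ultrafilter_nat :: "nat filter \<Rightarrow> bool" where
  "ultrafilter_nat U \<longleftrightarrow> U \<noteq> bot \<and> (\<forall>P. eventually P U \<or> eventually (\<lambda>n. \<not> P n) U)"

definition nonprincipal :: "nat filter \<Rightarrow> bool" where
  "nonprincipal U \<longleftrightarrow> (\<forall>n. \<not> in_uf U {n})"

definition selective :: "nat filter \<Rightarrow> bool" where
  "selective U \<longleftrightarrow>
     (\<forall>As :: nat \<Rightarrow> nat set. (\<forall>k. in_uf U (As k)) \<longrightarrow>
        (\<exists>A. in_uf U A \<and> (\<forall>k. finite (A - As k)))) \<and>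
     (\<forall>As :: nat \<Rightarrow> nat set.
        (\<forall>k. finite (As k) \<and> As k \<noteq> {}) \<and> (\<Union>k. As k) = UNIV \<and>
        (\<forall>k l. k \<noteq> l \<longrightarrow> As k \<inter> As l = {}) \<longrightarrow>
        (\<exists>A. in_uf U A \<and> (\<forall>k. \<exists>a. A \<inter> As k = {a})))"

definition reflexive_space :: "'a::real_normed_vector itself \<Rightarrow> bool" where
  "reflexive_space _ \<longleftrightarrow>
     (\<forall>\<Phi> :: ('a \<Rightarrow>\<^sub>L real) \<Rightarrow>\<^sub>L real. \<exists>x::'a. \<forall>f. blinfun_apply \<Phi> f = blinfun_apply f x)"

definition T_op :: "(nat \<Rightarrow> 'a::real_normed_vector) \<Rightarrow> (nat \<Rightarrow> ('a \<Rightarrow>\<^sub>L real)) \<Rightarrow> nat set \<Rightarrow> 'a \<Rightarrow> 'a" where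
  "T_op x xs A v = infsum (\<lambda>i. blinfun_apply (xs i) v *\<^sub>R x i) A"

end

theory Submission
  imports Defs
begin

text \<open>
  Let \<open>y\<^sub>0\<close> be the weak ultralimit of a bounded sequence \<open>(y\<^sub>n)\<close> (it exists by reflexivity).
  For \<open>n \<in> A\<close> split \<open>T\<^sub>A y\<^sub>n\<close> into the indices of \<open>A\<close> below \<open>n\<close>, the index \<open>n\<close> itself and
  those above \<open>n\<close>. Selectivity yields a set \<open>B \<in> \<U>\<close> so sparse that, for \<open>i < n\<close> in \<open>B\<close>, the
  value \<open>x\<^sub>i\<^sup>*(y\<^sub>n)\<close> is within \<open>\<epsilon> 2\<^sup>-\<^sup>i\<close> of \<open>x\<^sub>i\<^sup>*(y\<^sub>0)\<close>, and the indices above \<open>n\<close> lie in the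
  \<open>\<epsilon>\<close>-small tail of the series for \<open>y\<^sub>n\<close>. For \<open>A \<subseteq> B\<close> the lower part is then close to a
  tail of the series for \<open>y\<^sub>0\<close>, hence small, the upper part is small, and the middle term
  \<open>x\<^sub>n\<^sup>*(y\<^sub>n) x\<^sub>n\<close> is close to \<open>(lim\<^sub>\<U> x\<^sub>m\<^sup>*(y\<^sub>m)) x\<^sub>n\<close> along \<open>\<U>\<close>.
\<close>

lemma ultrafilter_nat_tendsto_Lim_compact:
  fixes f :: "nat \<Rightarrow> 'b::t2_space"
  assumes U: "ultrafilter_nat U" and K: "compact K" and ev: "eventually (\<lambda>n. f n \<in> K) U"
  shows "(f \<longlongrightarrow> Lim U f) U \<and> Lim U f \<in> K"
proof -
  have "filtermap f U \<noteq> bot" using U unfolding ultrafilter_nat_def by (simp add: filtermap_bot_iff)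
  moreover have "eventually (\<lambda>x. x \<in> K) (filtermap f U)" using ev by (simp add: eventually_filtermap)
  ultimately obtain l where l: "l \<in> K" "inf (nhds l) (filtermap f U) \<noteq> bot"
    using K unfolding compact_filter by blast
  have "(f \<longlongrightarrow> l) U"
  proof (rule topological_tendstoI)
    fix S :: "'b set" assume S: "open S" "l \<in> S"
    show "eventually (\<lambda>n. f n \<in> S) U"
    proof (rule ccontr)
      assume "\<not> eventually (\<lambda>n. f n \<in> S) U"
      then have "eventually (\<lambda>n. f n \<notin> S) U" using U unfolding ultrafilter_nat_def by blast
      then have "eventually (\<lambda>x. x \<notin> S) (filtermap f U)" by (simp add: eventually_filtermap)
      moreover have "eventually (\<lambda>x. x \<in> S) (nhds l)" using S eventually_nhds by blast
      ultimately have "eventually (\<lambda>x. False) (inf (nhds l) (filtermap f U))"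
        unfolding eventually_inf by blast
      then show False using l(2) by (simp add: eventually_False)
    qed
  qed
  moreover have "U \<noteq> bot" using U unfolding ultrafilter_nat_def by simp
  ultimately show ?thesis using l(1) tendsto_Lim by fastforce
qed

lemma ultrafilter_nat_tendsto_Lim_bounded:
  fixes f :: "nat \<Rightarrow> 'b::heine_borel"
  assumes "ultrafilter_nat U" and "bounded (range f)"
  shows "(f \<longlongrightarrow> Lim U f) U"
  using ultrafilter_nat_tendsto_Lim_compact[OF assms(1) compact_closure[THEN iffD2, OF assms(2)]]
  by (simp add: always_eventually closure_subset[THEN subsetD])

lemma bounded_range_blinfun_apply:
  assumes "bounded (range F)" and "bounded (range y)"
  shows "bounded (range (\<lambda>n. blinfun_apply (F n) (y n)))"
proof -
  obtain MF My where "\<And>n. norm (F n) \<le> MF" "\<And>n. norm (y n) \<le> My"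
    using assms by (auto simp: bounded_iff)
  then have "norm (blinfun_apply (F n) (y n)) \<le> MF * My" for n
    using norm_blinfun[of "F n" "y n"] by (smt (verit) mult_mono norm_ge_zero)
  then show ?thesis by (auto simp: bounded_iff)
qed

lemma ultrafilter_nat_eventually_ge:
  assumes U: "ultrafilter_nat U" and np: "nonprincipal U"
  shows "eventually (\<lambda>n. N \<le> n) U"
proof -
  have "eventually (\<lambda>n. n \<noteq> k) U" for k
    using np U unfolding nonprincipal_def in_uf_def ultrafilter_nat_def by force
  then have "eventually (\<lambda>n. \<forall>k\<in>{..<N}. n \<noteq> k) U"
    by (intro eventually_ball_finite) auto
  then show ?thesis by (rule eventually_mono) (auto simp: not_le)
qed

lemma summable_on_tail_small:
  fixes g :: "nat \<Rightarrow> 'a::banach"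
  assumes sg: "g summable_on UNIV" and e: "e > 0"
  shows "\<exists>N. \<forall>S \<subseteq> {N..}. norm (infsum g S) \<le> e"
proof -
  have "(sum g \<longlongrightarrow> infsum g UNIV) (finite_subsets_at_top UNIV)"
    using sg by (simp add: has_sum_def summable_iff_has_sum_infsum)
  then have "eventually (\<lambda>F. dist (sum g F) (infsum g UNIV) < e/2) (finite_subsets_at_top UNIV)"
    using e by (intro tendstoD) auto
  then obtain F0 where F0: "finite F0"
    "\<And>Y. finite Y \<Longrightarrow> F0 \<subseteq> Y \<Longrightarrow> dist (sum g Y) (infsum g UNIV) < e/2"
    unfolding eventually_finite_subsets_at_top by auto
  define N where "N = Suc (Max (insert 0 F0))"
  have F0N: "k < N" if "k \<in> F0" for k
    using F0(1) that unfolding N_def by (simp add: le_imp_less_Suc)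
  show ?thesis
  proof (intro exI allI impI)
    fix S assume SN: "S \<subseteq> {N..}"
    have finite_part: "norm (sum g G) < e" if G: "finite G" "G \<subseteq> S" for G
    proof -
      have "sum g (F0 \<union> G) = sum g F0 + sum g G"
        using F0(1) G SN F0N by (intro sum.union_disjoint) fastforce+
      moreover have "dist (sum g (F0 \<union> G)) (infsum g UNIV) < e/2" using F0 G by auto
      moreover have "dist (sum g F0) (infsum g UNIV) < e/2" using F0 by auto
      ultimately show ?thesis
        by (smt (verit, ccfv_threshold) dist_commute dist_norm dist_triangle_half_r add_diff_cancel_left')
    qed
    have "g summable_on S" using sg summable_on_subset_banach by blast
    show "norm (infsum g S) \<le> e"
    proof (rule field_le_epsilon)
      fix d :: real assume "d > 0"
      then obtain G where G: "finite G" "G \<subseteq> S" "dist (sum g G) (infsum g S) \<le> d"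
        using infsum_finite_approximation[OF \<open>g summable_on S\<close>] by blast
      have "norm (infsum g S) \<le> norm (sum g G) + dist (sum g G) (infsum g S)"
        by (metis dist_norm norm_triangle_sub norm_minus_commute)
      then show "norm (infsum g S) \<le> e + d" using finite_part[OF G(1,2)] G(3) by linarith
    qed
  qed
qed

lemma reflexive_space_weak_ultralimit:
  fixes y :: "nat \<Rightarrow> 'a::banach"
  assumes U: "ultrafilter_nat U" and R: "reflexive_space TYPE('a)" and b: "bounded (range y)"
  shows "\<exists>z. \<forall>f::'a \<Rightarrow>\<^sub>L real. ((\<lambda>n. blinfun_apply f (y n)) \<longlongrightarrow> blinfun_apply f z) U"
proof -
  obtain M where M: "\<And>n. norm (y n) \<le> M" using b unfolding bounded_iff by auto
  have ntriv: "\<not> trivial_limit U" using U unfolding ultrafilter_nat_def by simp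
  define \<phi> where "\<phi> f = Lim U (\<lambda>n. blinfun_apply f (y n))" for f :: "'a \<Rightarrow>\<^sub>L real"
  have conv: "((\<lambda>n. blinfun_apply f (y n)) \<longlongrightarrow> \<phi> f) U \<and> \<phi> f \<in> cball 0 (norm f * M)" for f
  proof -
    have "norm (blinfun_apply f (y n)) \<le> norm f * M" for n
      using norm_blinfun[of f "y n"] M[of n] by (smt (verit) mult_left_mono norm_ge_zero)
    then show ?thesis unfolding \<phi>_def
      by (intro ultrafilter_nat_tendsto_Lim_compact[OF U compact_cball always_eventually]) simp
  qed
  have "bounded_linear \<phi>"
  proof (rule bounded_linear_intro[where K=M])
    fix f g :: "'a \<Rightarrow>\<^sub>L real"
    have "((\<lambda>n. blinfun_apply (f + g) (y n)) \<longlongrightarrow> \<phi> f + \<phi> g) U"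
      using conv[of f] conv[of g] by (simp add: blinfun.add_left tendsto_add)
    then show "\<phi> (f + g) = \<phi> f + \<phi> g" unfolding \<phi>_def by (rule tendsto_Lim[OF ntriv])
  next
    fix r :: real and f :: "'a \<Rightarrow>\<^sub>L real"
    have "((\<lambda>n. blinfun_apply (r *\<^sub>R f) (y n)) \<longlongrightarrow> r *\<^sub>R \<phi> f) U"
      using conv[of f] by (auto simp: blinfun.scaleR_left intro: tendsto_mult_left)
    then show "\<phi> (r *\<^sub>R f) = r *\<^sub>R \<phi> f" unfolding \<phi>_def by (rule tendsto_Lim[OF ntriv])
  next
    fix f :: "'a \<Rightarrow>\<^sub>L real"
    show "norm (\<phi> f) \<le> norm f * M" using conv[of f] by simp
  qed
  then obtain z where "\<forall>f. blinfun_apply (Blinfun \<phi>) f = blinfun_apply f z"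
    using R unfolding reflexive_space_def by blast
  then show ?thesis
    using conv \<open>bounded_linear \<phi>\<close> by (metis bounded_linear_Blinfun_apply)
qed

lemma strict_mono_interval_index:
  fixes t :: "nat \<Rightarrow> nat"
  assumes "strict_mono t" and "t 0 = 0"
  shows "\<exists>k. t k \<le> n \<and> n < t (Suc k)"
proof -
  have ex: "\<exists>k. n < t (Suc k)"
    using strict_mono_imp_increasing[OF assms(1), of "Suc n"] by (intro exI[of _ n]) simp
  define k where "k = (LEAST k. n < t (Suc k))"
  have "n < t (Suc k)" unfolding k_def using ex by (rule LeastI_ex)
  moreover have "t k \<le> n"
  proof (cases k)
    case (Suc j)
    then have "\<not> n < t (Suc j)" using not_less_Least[of j "\<lambda>k. n < t (Suc k)"] k_def by simp
    then show ?thesis using Suc by simp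
  qed (use assms(2) in simp)
  ultimately show ?thesis by blast
qed

lemma strict_mono_interval_index_le:
  fixes t :: "nat \<Rightarrow> nat"
  assumes "strict_mono t" and "t k \<le> a" and "b < t (Suc l)" and "a \<le> b"
  shows "k \<le> l"
proof (rule ccontr)
  assume "\<not> k \<le> l"
  then have "t (Suc l) \<le> t k" using assms(1) by (simp add: strict_mono_less_eq)
  then show False using assms(2-4) by simp
qed

lemma strict_mono_interval_partition:
  fixes t :: "nat \<Rightarrow> nat"
  assumes t: "strict_mono t" "t 0 = 0"
  shows "(\<forall>k. finite {t k..<t (Suc k)} \<and> {t k..<t (Suc k)} \<noteq> {}) \<and>
    (\<Union>k. {t k..<t (Suc k)}) = UNIV \<and>
    (\<forall>k l. k \<noteq> l \<longrightarrow> {t k..<t (Suc k)} \<inter> {t l..<t (Suc l)} = {})"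
proof -
  have "{t k..<t (Suc k)} \<inter> {t l..<t (Suc l)} = {}" if "k \<noteq> l" for k l
  proof (rule ccontr)
    assume "{t k..<t (Suc k)} \<inter> {t l..<t (Suc l)} \<noteq> {}"
    then obtain n where "n \<in> {t k..<t (Suc k)}" "n \<in> {t l..<t (Suc l)}" by blast
    then show False using that strict_mono_interval_index_le[OF t(1), of k n n l]
      strict_mono_interval_index_le[OF t(1), of l n n k] by auto
  qed
  moreover have "n \<in> (\<Union>k. {t k..<t (Suc k)})" for n
    using strict_mono_interval_index[OF t, of n] by auto
  moreover have "t k < t (Suc k)" for k using strict_monoD[OF t(1)] by simp
  ultimately show ?thesis by auto
qed

text \<open>
  The second clause of selectivity applied to the blocks \<open>[t k, t (k+1))\<close> gives a set meeting
  each block once; intersecting with the union of the even or of the odd blocks then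
  leaves a whole block between any two of its points.
\<close>

lemma selective_block_separated_set:
  fixes t :: "nat \<Rightarrow> nat"
  assumes U: "ultrafilter_nat U" and sel: "selective U" and t: "strict_mono t" "t 0 = 0"
  shows "\<exists>A. in_uf U A \<and> (\<forall>a\<in>A. \<forall>b\<in>A. a < b \<longrightarrow> (\<exists>k. a < t (Suc k) \<and> t (Suc (Suc k)) \<le> b))"
proof -
  have "\<exists>A1. in_uf U A1 \<and> (\<forall>k. \<exists>a. A1 \<inter> {t k..<t (Suc k)} = {a})"
    using strict_mono_interval_partition[OF t]
    by (rule sel[unfolded selective_def, THEN conjunct2, rule_format])
  then obtain A1 where A1: "in_uf U A1" "\<And>k. \<exists>a. A1 \<inter> {t k..<t (Suc k)} = {a}" by blast
  obtain idx where idx: "\<And>n. t (idx n) \<le> n" "\<And>n. n < t (Suc (idx n))"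
    using strict_mono_interval_index[OF t] by metis
  have "eventually (\<lambda>n. even (idx n) = True) U \<or> eventually (\<lambda>n. even (idx n) = False) U"
    using U unfolding ultrafilter_nat_def by simp
  then obtain p where p: "eventually (\<lambda>n. even (idx n) = p) U" by blast
  define A where "A = A1 \<inter> {n. even (idx n) = p}"
  have "in_uf U A"
    using eventually_conj[OF A1(1)[unfolded in_uf_def] p] unfolding A_def in_uf_def by simp
  moreover have "\<exists>k. a < t (Suc k) \<and> t (Suc (Suc k)) \<le> b"
    if ab: "a \<in> A" "b \<in> A" "a < b" for a b
  proof (intro exI conjI)
    have "idx a \<le> idx b"
      using strict_mono_interval_index_le[OF t(1), of "idx a" a b "idx b"] idx[of a] idx[of b] ab(3)
      by simp
    moreover have "idx a \<noteq> idx b"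
    proof
      assume same: "idx a = idx b"
      obtain c where "A1 \<inter> {t (idx a)..<t (Suc (idx a))} = {c}" using A1(2) by blast
      moreover have "a \<in> A1 \<inter> {t (idx a)..<t (Suc (idx a))}" "b \<in> A1 \<inter> {t (idx a)..<t (Suc (idx a))}"
        using ab idx[of a] idx[of b] same unfolding A_def by auto
      ultimately show False using ab(3) by auto
    qed
    moreover have "even (idx a) = even (idx b)" using ab unfolding A_def by simp
    ultimately have "Suc (Suc (idx a)) \<le> idx b" by presburger
    then have "t (Suc (Suc (idx a))) \<le> t (idx b)" using t(1) by (simp add: strict_mono_less_eq)
    then show "t (Suc (Suc (idx a))) \<le> b" using idx[of b] by linarith
    show "a < t (Suc (idx a))" by (rule idx)
  qed
  ultimately show ?thesis by blast
qed

text \<open>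
  The first clause of selectivity gives \<open>A\<^sub>0 \<in> \<U>\<close> with every \<open>A\<^sub>0 - S a\<close> finite; \<open>h K\<close> exceeds
  all points of \<open>A\<^sub>0 - S a\<close> for \<open>a \<le> K\<close>, and the blocks of the lemma above are cut at the
  iterates of \<open>h\<close>.
\<close>

lemma selective_diagonal:
  assumes U: "ultrafilter_nat U" and sel: "selective U" and S: "\<And>a. in_uf U (S a)"
  shows "\<exists>A. in_uf U A \<and> (\<forall>a\<in>A. \<forall>b\<in>A. a < b \<longrightarrow> b \<in> S a)"
proof -
  obtain A0 where A0: "in_uf U A0" "\<And>k. finite (A0 - S k)"
    using sel[unfolded selective_def, THEN conjunct1, rule_format] S by blast
  define h where "h K = Suc (K + Max (insert 0 (\<Union>j\<le>K. A0 - S j)))" for K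
  have h: "b \<in> S a" if "a \<le> K" "h K \<le> b" "b \<in> A0" for a b K
  proof (rule ccontr)
    assume "b \<notin> S a"
    moreover have "finite (\<Union>j\<le>K. A0 - S j)" using A0(2) by blast
    ultimately have "b \<le> Max (insert 0 (\<Union>j\<le>K. A0 - S j))"
      using that by (intro Max_ge) auto
    then show False using that(2) unfolding h_def by simp
  qed
  define t where "t = rec_nat 0 (\<lambda>_. h)"
  have t: "strict_mono t" "t 0 = 0"
    unfolding strict_mono_Suc_iff t_def by (simp_all add: h_def)
  obtain A1 where A1: "in_uf U A1"
    "\<And>a b. a \<in> A1 \<Longrightarrow> b \<in> A1 \<Longrightarrow> a < b \<Longrightarrow> \<exists>k. a < t (Suc k) \<and> t (Suc (Suc k)) \<le> b"
    using selective_block_separated_set[OF U sel t] by blast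
  have "in_uf U (A0 \<inter> A1)" using A0(1) A1(1) unfolding in_uf_def by (simp add: eventually_conj)
  moreover have "b \<in> S a" if ab: "a \<in> A0 \<inter> A1" "b \<in> A0 \<inter> A1" "a < b" for a b
  proof -
    obtain k where "a < t (Suc k)" "t (Suc (Suc k)) \<le> b" using A1(2)[of a b] ab by blast
    moreover have "t (Suc (Suc k)) = h (t (Suc k))" unfolding t_def by simp
    ultimately show ?thesis using h[of a "t (Suc k)" b] ab(2) by simp
  qed
  ultimately show ?thesis by blast
qed

lemma sum_halving_le:
  fixes e :: real
  assumes "e \<ge> 0"
  shows "(\<Sum>i<n. e / 2 ^ Suc i) \<le> e"
proof -
  have "(\<Sum>i<n. e / 2 ^ Suc i) = e * (1 - 1 / 2 ^ n)"
    by (induction n) (simp_all add: field_simps)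
  also have "\<dots> \<le> e" using assms by (simp add: mult_left_le)
  finally show ?thesis .
qed

lemma T_op_split_at:
  fixes x :: "nat \<Rightarrow> 'a::banach"
  assumes summable: "(\<lambda>i. blinfun_apply (xs i) v *\<^sub>R x i) summable_on UNIV" and "n \<in> A"
  shows "T_op x xs A v = (\<Sum>i\<in>A \<inter> {..<n}. blinfun_apply (xs i) v *\<^sub>R x i)
      + blinfun_apply (xs n) v *\<^sub>R x n + infsum (\<lambda>i. blinfun_apply (xs i) v *\<^sub>R x i) (A \<inter> {n<..})"
proof -
  let ?g = "\<lambda>i. blinfun_apply (xs i) v *\<^sub>R x i"
  have sub: "?g summable_on C" for C using summable_on_subset_banach[OF summable] by blast
  have "infsum ?g ({n} \<union> A \<inter> {n<..}) = ?g n + infsum ?g (A \<inter> {n<..})"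
    by (subst infsum_Un_disjoint[OF sub sub]) auto
  moreover have "infsum ?g (A \<inter> {..<n} \<union> ({n} \<union> A \<inter> {n<..}))
      = infsum ?g (A \<inter> {..<n}) + infsum ?g ({n} \<union> A \<inter> {n<..})"
    by (rule infsum_Un_disjoint[OF sub sub]) auto
  moreover have "A \<inter> {..<n} \<union> ({n} \<union> A \<inter> {n<..}) = A" using \<open>n \<in> A\<close> by auto
  ultimately show ?thesis unfolding T_op_def by (simp add: add.assoc)
qed

text \<open>Here \<open>v\<close> plays \<open>y\<^sub>n\<close> and \<open>w\<close> the weak ultralimit \<open>y\<^sub>0\<close>.\<close>

lemma T_op_rank_one_estimate:
  fixes x :: "nat \<Rightarrow> 'a::banach"
  assumes summable: "(\<lambda>i. blinfun_apply (xs i) v *\<^sub>R x i) summable_on UNIV"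
    and M: "\<And>i. norm (x i) \<le> M" and "n \<in> A"
    and close: "\<And>i. i \<in> A \<Longrightarrow> i < n \<Longrightarrow>
      \<bar>blinfun_apply (xs i) v - blinfun_apply (xs i) w\<bar> * M \<le> e / 2 ^ Suc i"
    and head: "norm (\<Sum>i\<in>A \<inter> {..<n}. blinfun_apply (xs i) w *\<^sub>R x i) \<le> e"
    and tail: "norm (infsum (\<lambda>i. blinfun_apply (xs i) v *\<^sub>R x i) (A \<inter> {n<..})) \<le> e"
    and e: "e \<ge> 0"
  shows "norm (T_op x xs A v - c *\<^sub>R x n) \<le> 3 * e + \<bar>blinfun_apply (xs n) v - c\<bar> * M"
proof -
  define F where "F = A \<inter> {..<n}"
  define D where "D i = (blinfun_apply (xs i) v - blinfun_apply (xs i) w) *\<^sub>R x i" for i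
  let ?W = "\<Sum>i\<in>F. blinfun_apply (xs i) w *\<^sub>R x i"
  let ?R = "infsum (\<lambda>i. blinfun_apply (xs i) v *\<^sub>R x i) (A \<inter> {n<..})"
  have scaled: "norm (r *\<^sub>R x i) \<le> \<bar>r\<bar> * M" for r i
    using M[of i] by (simp add: mult_left_mono)
  have "T_op x xs A v - c *\<^sub>R x n = sum D F + ?W + (blinfun_apply (xs n) v - c) *\<^sub>R x n + ?R"
    unfolding T_op_split_at[OF summable \<open>n \<in> A\<close>] D_def F_def
    by (simp add: scaleR_diff_left sum_subtractf algebra_simps)
  also have "norm \<dots> \<le> norm (sum D F) + norm ?W + \<bar>blinfun_apply (xs n) v - c\<bar> * M + norm ?R"
    using scaled by (smt (verit) norm_triangle_ineq)
  also have "norm (sum D F) \<le> e"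
  proof -
    have "norm (sum D F) \<le> (\<Sum>i\<in>F. e / 2 ^ Suc i)"
      using norm_sum[of D F] sum_mono[of F "\<lambda>i. norm (D i)" "\<lambda>i. e / 2 ^ Suc i"]
        scaled close unfolding D_def F_def by (smt (verit) IntE lessThan_iff)
    also have "\<dots> \<le> (\<Sum>i<n. e / 2 ^ Suc i)" using e by (intro sum_mono2) (auto simp: F_def)
    also have "\<dots> \<le> e" using e by (rule sum_halving_le)
    finally show ?thesis .
  qed
  finally show ?thesis using head tail unfolding F_def by linarith
qed

lemma T_op_rank_one_good_set:
  fixes x :: "nat \<Rightarrow> 'a::banach" and y :: "nat \<Rightarrow> 'a"
  assumes U: "ultrafilter_nat U" and np: "nonprincipal U" and sel: "selective U"
    and summable: "\<And>v. (\<lambda>i. blinfun_apply (xs i) v *\<^sub>R x i) summable_on UNIV"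
    and M: "\<And>i. norm (x i) \<le> M"
    and weak: "\<And>i. ((\<lambda>n. blinfun_apply (xs i) (y n)) \<longlongrightarrow> blinfun_apply (xs i) z) U"
    and e: "e > 0"
  shows "\<exists>B. in_uf U B \<and> (\<forall>A n c. A \<subseteq> B \<longrightarrow> n \<in> A \<longrightarrow>
    norm (T_op x xs A (y n) - c *\<^sub>R x n) \<le> 3 * e + \<bar>blinfun_apply (xs n) (y n) - c\<bar> * M)"
proof -
  let ?g = "\<lambda>v i. blinfun_apply (xs i) v *\<^sub>R x i"
  obtain N0 where N0: "\<And>S. S \<subseteq> {N0..} \<Longrightarrow> norm (infsum (?g z) S) \<le> e"
    using summable_on_tail_small[OF summable e] by blast
  have "\<forall>a. \<exists>N. \<forall>S \<subseteq> {N..}. norm (infsum (?g (y a)) S) \<le> e"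
    using summable_on_tail_small[OF summable e] by blast
  then obtain N where N: "\<And>a S. S \<subseteq> {N a..} \<Longrightarrow> norm (infsum (?g (y a)) S) \<le> e"
    by metis
  define S where "S a = {b. N a \<le> b \<and>
    \<bar>blinfun_apply (xs a) (y b) - blinfun_apply (xs a) z\<bar> * M \<le> e / 2 ^ Suc a}" for a
  have "in_uf U (S a)" for a
  proof -
    have "((\<lambda>b. \<bar>blinfun_apply (xs a) (y b) - blinfun_apply (xs a) z\<bar> * M)
        \<longlongrightarrow> \<bar>blinfun_apply (xs a) z - blinfun_apply (xs a) z\<bar> * M) U"
      by (intro tendsto_mult_right tendsto_rabs tendsto_diff weak tendsto_const)
    then have "eventually (\<lambda>b. \<bar>blinfun_apply (xs a) (y b) - blinfun_apply (xs a) z\<bar> * M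
        < e / 2 ^ Suc a) U"
      using e by (intro order_tendstoD(2)) auto
    with ultrafilter_nat_eventually_ge[OF U np, of "N a"]
    have "eventually (\<lambda>b. b \<in> S a) U"
      unfolding S_def by (rule eventually_elim2) simp
    then show ?thesis unfolding in_uf_def .
  qed
  then obtain D where D: "in_uf U D" "\<forall>a\<in>D. \<forall>b\<in>D. a < b \<longrightarrow> b \<in> S a"
    using selective_diagonal[OF U sel] by blast
  define B where "B = D \<inter> {N0..}"
  have "in_uf U B"
    using eventually_conj[OF D(1)[unfolded in_uf_def] ultrafilter_nat_eventually_ge[OF U np, of N0]]
    unfolding B_def in_uf_def by simp
  moreover have "norm (T_op x xs A (y n) - c *\<^sub>R x n)
      \<le> 3 * e + \<bar>blinfun_apply (xs n) (y n) - c\<bar> * M" if A: "A \<subseteq> B" "n \<in> A" for A n c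
  proof (rule T_op_rank_one_estimate[OF summable M \<open>n \<in> A\<close>])
    show "\<bar>blinfun_apply (xs i) (y n) - blinfun_apply (xs i) z\<bar> * M \<le> e / 2 ^ Suc i"
      if "i \<in> A" "i < n" for i
      using A that D(2) unfolding B_def S_def by blast
    show "norm (\<Sum>i\<in>A \<inter> {..<n}. ?g z i) \<le> e"
      using N0[of "A \<inter> {..<n}"] A unfolding B_def by auto
    have "A \<inter> {n<..} \<subseteq> {N n..}" using A D(2) unfolding B_def S_def by auto
    then show "norm (infsum (?g (y n)) (A \<inter> {n<..})) \<le> e" by (rule N)
  qed (use e in simp)
  ultimately show ?thesis by blast
qed

lemma T_op_ultralimit_close:
  fixes x :: "nat \<Rightarrow> 'a::banach" and y :: "nat \<Rightarrow> 'a"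
  assumes U: "ultrafilter_nat U" and "nonprincipal U" and "selective U"
    and "\<And>v. (\<lambda>i. blinfun_apply (xs i) v *\<^sub>R x i) summable_on UNIV"
    and M: "\<And>i. norm (x i) \<le> M"
    and "\<And>i. ((\<lambda>n. blinfun_apply (xs i) (y n)) \<longlongrightarrow> blinfun_apply (xs i) z) U"
    and L: "((\<lambda>n. blinfun_apply (xs n) (y n)) \<longlongrightarrow> L) U"
    and e: "e > 0"
  shows "\<exists>B. in_uf U B \<and> (\<forall>A. in_uf U A \<and> A \<subseteq> B \<longrightarrow>
    Lim U (\<lambda>n. norm (T_op x xs A (y n) - L *\<^sub>R x n)) \<le> 4 * e)"
proof -
  obtain B where B: "in_uf U B" "\<forall>A n c. A \<subseteq> B \<longrightarrow> n \<in> A \<longrightarrow>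
      norm (T_op x xs A (y n) - c *\<^sub>R x n) \<le> 3 * e + \<bar>blinfun_apply (xs n) (y n) - c\<bar> * M"
    using T_op_rank_one_good_set[OF assms(1-6) e] by blast
  have "((\<lambda>n. \<bar>blinfun_apply (xs n) (y n) - L\<bar> * M) \<longlongrightarrow> \<bar>L - L\<bar> * M) U"
    by (intro tendsto_mult_right tendsto_rabs tendsto_diff L tendsto_const)
  then have small: "eventually (\<lambda>n. \<bar>blinfun_apply (xs n) (y n) - L\<bar> * M < e) U"
    using e by (intro order_tendstoD(2)) auto
  have "Lim U (\<lambda>n. norm (T_op x xs A (y n) - L *\<^sub>R x n)) \<le> 4 * e"
    if A: "in_uf U A" "A \<subseteq> B" for A
  proof -
    have "eventually (\<lambda>n. norm (T_op x xs A (y n) - L *\<^sub>R x n) \<in> {0..4 * e}) U"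
      using small A(1)[unfolded in_uf_def]
    proof (rule eventually_elim2)
      show "norm (T_op x xs A (y n) - L *\<^sub>R x n) \<in> {0..4 * e}"
        if "\<bar>blinfun_apply (xs n) (y n) - L\<bar> * M < e" "n \<in> A" for n
        using B(2)[rule_format, of A n L] A(2) that by simp
    qed
    from ultrafilter_nat_tendsto_Lim_compact[OF U compact_Icc this] show ?thesis by simp
  qed
  with B(1) show ?thesis by blast
qed

theorem lemma4p3:
  fixes U :: "nat filter"
    and x :: "nat \<Rightarrow> 'a::banach"
    and xs :: "nat \<Rightarrow> ('a \<Rightarrow>\<^sub>L real)"
  assumes "ultrafilter_nat U" and "nonprincipal U" and "selective U"
    and "reflexive_space TYPE('a)"
    and "bounded (range x)" and "bounded (range xs)"
    and "\<forall>f :: 'a \<Rightarrow>\<^sub>L real. ((\<lambda>n. blinfun_apply f (x n)) \<longlongrightarrow> 0) U"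
    and "\<forall>\<Phi> :: ('a \<Rightarrow>\<^sub>L real) \<Rightarrow>\<^sub>L real. ((\<lambda>n. blinfun_apply \<Phi> (xs n)) \<longlongrightarrow> 0) U"
    and "\<forall>v. (\<lambda>i. blinfun_apply (xs i) v *\<^sub>R x i) summable_on UNIV"
  shows "\<forall>y :: nat \<Rightarrow> 'a. bounded (range y) \<longrightarrow>
           (\<forall>\<epsilon>>0. \<exists>B. in_uf U B \<and>
              (\<forall>A. in_uf U A \<and> A \<subseteq> B \<longrightarrow>
                 Lim U (\<lambda>n. norm (T_op x xs A (y n)
                     - Lim U (\<lambda>m. blinfun_apply (xs m) (y m)) *\<^sub>R x n)) < \<epsilon>))"
proof (intro allI impI)
  fix y :: "nat \<Rightarrow> 'a" and \<epsilon> :: real assume y: "bounded (range y)" and "\<epsilon> > 0"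
  obtain M where M: "\<And>i. norm (x i) \<le> M" using assms(5) by (auto simp: bounded_iff)
  obtain z where z: "\<forall>f :: 'a \<Rightarrow>\<^sub>L real. ((\<lambda>n. blinfun_apply f (y n)) \<longlongrightarrow> blinfun_apply f z) U"
    using reflexive_space_weak_ultralimit[OF assms(1,4) y] by blast
  have L: "((\<lambda>m. blinfun_apply (xs m) (y m)) \<longlongrightarrow> Lim U (\<lambda>m. blinfun_apply (xs m) (y m))) U"
    using assms(1,6) y by (intro ultrafilter_nat_tendsto_Lim_bounded bounded_range_blinfun_apply)
  have "\<exists>B. in_uf U B \<and> (\<forall>A. in_uf U A \<and> A \<subseteq> B \<longrightarrow>
      Lim U (\<lambda>n. norm (T_op x xs A (y n) - Lim U (\<lambda>m. blinfun_apply (xs m) (y m)) *\<^sub>R x n))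
        \<le> 4 * (\<epsilon> / 5))"
    by (rule T_op_ultralimit_close[OF assms(1-3) _ M _ L, where z = z])
      (use assms(9) z \<open>\<epsilon> > 0\<close> in simp_all)
  moreover have "4 * (\<epsilon> / 5) < \<epsilon>" using \<open>\<epsilon> > 0\<close> by simp
  ultimately show "\<exists>B. in_uf U B \<and> (\<forall>A. in_uf U A \<and> A \<subseteq> B \<longrightarrow>
      Lim U (\<lambda>n. norm (T_op x xs A (y n) - Lim U (\<lambda>m. blinfun_apply (xs m) (y m)) *\<^sub>R x n)) < \<epsilon>)"
    by (meson le_less_trans)
qed

end
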